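(* For non-zero integers $a,b$ let $f_{a,b}:(0,\infty)\to(0,\infty)$, $f_{a,b}(z)=z^{a/b}$ (real positive branch), and let $I\subseteq(0,\infty)$ have non-empty interior. Then there exist uncountably many $\zeta\in\mathscr{L}\cap I$ such that, for all non-zero integers $a,b$, $f_{a,b}(\zeta)\in\mathscr{L}$ holds if and only if $a/b\in\mathbb{Z}$. In particular, for any fixed coprime non-zero integers $a,b$ with $|b|\geq2$, the set $f_{a,b}(\mathscr{L}\cap(0,\infty))\cap\mathscr{L}$ is uncountable but $f_{a,b}(\mathscr{L}\cap(0,\infty))\not\subseteq\mathscr{L}$.
   Context: $\mathscr{L}$ is the set of Liouville numbers (real irrational $\zeta$ such that for every $\eta>0$ there are infinitely many rationals $y/x$, $x\geq1$, with $|\zeta-y/x|\leq x^{-\eta}$). *)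

theory Defs
  imports "HOL-Analysis.Analysis"
begin

text \<open>The rationals are counted via their representing pairs (x,y); for irrational zeta
this is equivalent to counting distinct rational values.\<close>
definition Liouville_set :: "real set" where
  "Liouville_set = {\<zeta>. \<zeta> \<notin> \<rat> \<and>
     (\<forall>\<eta>::real. \<eta> > 0 \<longrightarrow>
        infinite {(x::int, y::int). x \<ge> 1 \<and>
                   \<bar>\<zeta> - real_of_int y / real_of_int x\<bar> \<le> real_of_int x powr (- \<eta>)})}"

definition f_pow :: "int \<Rightarrow> int \<Rightarrow> real \<Rightarrow> real" where
  "f_pow a b z = z powr (real_of_int a / real_of_int b)"

end

theory Submission
  imports Defs
begin

text \<open>
  The witnesses are the numbers \<zeta>_S = A / 3^n_0 + \<Sum>_j d_j / 3^n_(j+1), where n_k = 2 (N+1) (k+1)!,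
  d_j = 8 for j \<in> S and d_j = 4 otherwise, and A = 2 (mod 4) and N are chosen to place \<zeta>_S in
  the given interval; distinct sets S give distinct numbers. The partial sums p_k / q_k satisfy
  q_(k+1) = q_k^(k+2) and 0 < \<zeta>_S - p_k / q_k \<le> 12 / q_(k+1), so \<zeta>_S is a Liouville number,
  and integral powers of Liouville numbers are again Liouville numbers.

  Conversely let b not divide a and suppose that \<xi> = \<zeta>_S^(a/b) were a Liouville number. Take a
  very good approximation u / v of \<xi> and the index k with q_k^(a+1) \<le> v^E < q_(k+1)^(a+1),
  where E = 2b (a+1). Then (u/v)^b and (p_k/q_k)^a both lie closer than 1 / (2 v^b q_k^a) to
  \<xi>^b = \<zeta>_S^a, so they are equal: u^b q_k^a = p_k^a v^b. But p_k = A = 2 (mod 4) while q_k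
  is odd, and comparing 2-adic valuations gives b | a.
\<close>

section \<open>Liouville numbers through inexact approximations\<close>

definition approx_of_order :: "real \<Rightarrow> real \<Rightarrow> int \<Rightarrow> int \<Rightarrow> bool" where
  "approx_of_order \<xi> \<eta> x y \<longleftrightarrow> 1 \<le> x \<and> \<bar>\<xi> - of_int y / of_int x\<bar> \<le> of_int x powr - \<eta>"

lemma approx_of_order_dist_le_1:
  assumes "approx_of_order \<xi> \<eta> x y" "0 \<le> \<eta>"
  shows "\<bar>\<xi> - of_int y / of_int x\<bar> \<le> 1"
proof -
  have "1 \<le> real_of_int x" using assms(1) by (simp add: approx_of_order_def)
  then have "real_of_int x powr - \<eta> \<le> real_of_int x powr 0"
    using assms(2) by (intro powr_mono) auto
  then have "real_of_int x powr - \<eta> \<le> 1"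
    using \<open>1 \<le> real_of_int x\<close> by simp
  then show ?thesis
    using assms(1) by (auto simp: approx_of_order_def)
qed

lemma finite_approx_of_order_bounded_denominator:
  assumes "0 \<le> \<eta>"
  shows "finite {(x, y). approx_of_order \<xi> \<eta> x y \<and> x \<le> X}"
proof (rule finite_subset)
  define B where "B = \<lceil>of_int X * (\<bar>\<xi>\<bar> + 1)\<rceil>"
  show "{(x, y). approx_of_order \<xi> \<eta> x y \<and> x \<le> X} \<subseteq> {1..X} \<times> {-B..B}"
  proof
    fix p assume "p \<in> {(x, y). approx_of_order \<xi> \<eta> x y \<and> x \<le> X}"
    then obtain x y where p: "p = (x, y)" and app: "approx_of_order \<xi> \<eta> x y" and "x \<le> X"
      by blast
    then have x: "1 \<le> x" by (simp add: approx_of_order_def)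
    have "\<bar>of_int y / of_int x\<bar> \<le> \<bar>\<xi>\<bar> + 1"
      using approx_of_order_dist_le_1[OF app assms] by linarith
    then have "\<bar>of_int y\<bar> \<le> of_int x * (\<bar>\<xi>\<bar> + 1)"
      using x by (simp add: abs_divide field_simps)
    also have "\<dots> \<le> of_int X * (\<bar>\<xi>\<bar> + 1)"
      using \<open>x \<le> X\<close> by (intro mult_right_mono) auto
    finally have "of_int \<bar>y\<bar> \<le> (of_int B :: real)"
      unfolding B_def of_int_abs using le_of_int_ceiling[of "of_int X * (\<bar>\<xi>\<bar> + 1)"] by linarith
    then have "\<bar>y\<bar> \<le> B" by (simp only: of_int_le_iff)
    with x p \<open>x \<le> X\<close> show "p \<in> {1..X} \<times> {-B..B}" by auto
  qed
qed simp

lemma infinite_approx_of_order_iff_unbounded: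
  assumes "0 \<le> \<eta>"
  shows "infinite {(x, y). approx_of_order \<xi> \<eta> x y} \<longleftrightarrow> (\<forall>X. \<exists>x y. approx_of_order \<xi> \<eta> x y \<and> X < x)"
proof
  assume inf: "infinite {(x, y). approx_of_order \<xi> \<eta> x y}"
  show "\<forall>X. \<exists>x y. approx_of_order \<xi> \<eta> x y \<and> X < x"
  proof (rule ccontr)
    assume "\<not> ?thesis"
    then obtain X where "\<forall>x y. approx_of_order \<xi> \<eta> x y \<longrightarrow> x \<le> X"
      by (auto simp: not_less)
    then have "{(x, y). approx_of_order \<xi> \<eta> x y} = {(x, y). approx_of_order \<xi> \<eta> x y \<and> x \<le> X}"
      by auto
    with inf finite_approx_of_order_bounded_denominator[OF assms] show False
      by simp
  qed
next
  assume unb: "\<forall>X. \<exists>x y. approx_of_order \<xi> \<eta> x y \<and> X < x"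
  show "infinite {(x, y). approx_of_order \<xi> \<eta> x y}"
  proof
    assume "finite {(x, y). approx_of_order \<xi> \<eta> x y}"
    then have fin: "finite (fst ` {(x, y). approx_of_order \<xi> \<eta> x y})" by simp
    obtain x y where "approx_of_order \<xi> \<eta> x y" "Max (insert 0 (fst ` {(x, y). approx_of_order \<xi> \<eta> x y})) < x"
      using unb by blast
    with fin show False by force
  qed
qed

lemma eq_if_dist_less_inverse_denominators:
  fixes m n d e :: int
  assumes "0 < d" "0 < e" "\<bar>of_int m / of_int d - of_int n / of_int e\<bar> < 1 / (of_int d * of_int e :: real)"
  shows "m * e = n * d"
proof -
  have "\<bar>of_int m / of_int d - of_int n / of_int e\<bar> = of_int \<bar>m * e - n * d\<bar> / (of_int d * of_int e :: real)"
    using assms by (simp add: field_simps abs_divide)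
  with assms have "of_int \<bar>m * e - n * d\<bar> < (1 :: real)"
    by (simp add: divide_less_cancel)
  then have "\<bar>m * e - n * d\<bar> < 1" by (simp only: of_int_less_1_iff)
  then show ?thesis by simp
qed

text \<open>Demanding inexact approximations makes irrationality automatic: a rational m / d has no
  inexact approximation of order 2 with denominator beyond d.\<close>

lemma Liouville_set_iff:
  "\<xi> \<in> Liouville_set \<longleftrightarrow>
     (\<forall>\<eta>>0. \<forall>X. \<exists>x y. approx_of_order \<xi> \<eta> x y \<and> X < x \<and> of_int y / of_int x \<noteq> \<xi>)"
    (is "_ \<longleftrightarrow> ?inexact")
proof -
  have "{(x, y). 1 \<le> x \<and> \<bar>\<xi> - of_int y / of_int x\<bar> \<le> of_int x powr - \<eta>} = {(x, y). approx_of_order \<xi> \<eta> x y}"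
    for \<eta> by (simp add: approx_of_order_def)
  then have L: "\<xi> \<in> Liouville_set \<longleftrightarrow> \<xi> \<notin> \<rat> \<and> (\<forall>\<eta>>0. \<forall>X. \<exists>x y. approx_of_order \<xi> \<eta> x y \<and> X < x)"
    unfolding Liouville_set_def by (simp add: infinite_approx_of_order_iff_unbounded)
  have "\<xi> \<notin> \<rat>" if ?inexact
  proof
    assume "\<xi> \<in> \<rat>"
    then obtain m d where d: "0 < d" and \<xi>: "\<xi> = of_int m / of_int d"
      by (auto elim: Rats_cases')
    obtain x y where app: "approx_of_order \<xi> 2 x y" and "d < x" and ne: "of_int y / of_int x \<noteq> \<xi>"
      using \<open>?inexact\<close> by (meson zero_less_numeral)
    then have x: "0 < x" by (simp add: approx_of_order_def)
    have "\<bar>\<xi> - of_int y / of_int x\<bar> \<le> 1 / (of_int x * of_int x)"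
      using app x by (simp add: approx_of_order_def powr_minus_divide power2_eq_square)
    also have "\<dots> < 1 / (of_int d * of_int x)"
      using d x \<open>d < x\<close> by (intro divide_strict_left_mono) auto
    finally have "m * x = y * d"
      using d x unfolding \<xi> by (intro eq_if_dist_less_inverse_denominators) auto
    then show False
      using ne d x unfolding \<xi> by (simp add: field_simps flip: of_int_mult)
  qed
  moreover have "of_int y / of_int x \<noteq> \<xi>" if "\<xi> \<notin> \<rat>" for x y
    using that by auto
  ultimately show ?thesis
    unfolding L by (meson less_imp_le)
qed

section \<open>Integral powers of Liouville numbers\<close>

lemma abs_power_diff_le:
  fixes y z M :: real
  assumes "\<bar>y\<bar> \<le> M" "\<bar>z\<bar> \<le> M"
  shows "\<bar>y ^ m - z ^ m\<bar> \<le> real m * M ^ (m - 1) * \<bar>y - z\<bar>"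
proof (cases "M = 0 \<or> m = 0")
  case True
  with assms show ?thesis by auto
next
  case False
  then have M: "0 < M" and m: "0 < m" using assms by auto
  have "\<bar>(y / M) ^ m - (z / M) ^ m\<bar> \<le> real m * \<bar>y / M - z / M\<bar>"
    using norm_power_diff[of "y / M" "z / M" m] assms M by (simp add: abs_divide)
  then have "\<bar>y ^ m - z ^ m\<bar> / M ^ m \<le> real m * \<bar>y - z\<bar> / M"
    using M by (simp add: power_divide abs_divide diff_divide_distrib[symmetric])
  moreover have "M ^ m = M ^ (m - 1) * M"
    using m by (simp add: power_eq_if)
  ultimately show ?thesis
    using M by (simp add: field_simps)
qed

lemma abs_power_diff_le_of_close:
  fixes y z :: real
  assumes "\<bar>y - z\<bar> \<le> 1"
  shows "\<bar>y ^ m - z ^ m\<bar> \<le> real m * (\<bar>y\<bar> + 1) ^ (m - 1) * \<bar>y - z\<bar>"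
  using assms by (intro abs_power_diff_le) auto

lemma Liouville_set_irrational: "\<xi> \<in> Liouville_set \<Longrightarrow> \<xi> \<notin> \<rat>"
  by (simp add: Liouville_set_def)

lemma Liouville_set_uminus:
  assumes "\<xi> \<in> Liouville_set"
  shows "- \<xi> \<in> Liouville_set"
proof -
  have "approx_of_order (- \<xi>) \<eta> x (- y) \<and> of_int (- y) / of_int x \<noteq> - \<xi>"
    if "approx_of_order \<xi> \<eta> x y" "of_int y / of_int x \<noteq> \<xi>" for \<eta> x y
    using that by (auto simp: approx_of_order_def abs_minus_commute)
  with assms show ?thesis
    unfolding Liouville_set_iff by blast
qed

lemma Liouville_set_power:
  assumes \<zeta>: "\<zeta> \<in> Liouville_set" and m: "1 \<le> m"
  shows "\<zeta> ^ m \<in> Liouville_set"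
  unfolding Liouville_set_iff
proof (intro allI impI)
  fix \<eta> :: real and X :: int
  assume "0 < \<eta>"
  define C where "C = real m * (\<bar>\<zeta>\<bar> + 1) ^ (m - 1)"
  have "0 < m * \<eta> + 1" using \<open>0 < \<eta>\<close> by (simp add: add_nonneg_pos)
  then obtain q p where app: "approx_of_order \<zeta> (m * \<eta> + 1) q p" and q: "max X \<lceil>C\<rceil> < q"
    and inexact: "of_int p / of_int q \<noteq> \<zeta>"
    using \<zeta> unfolding Liouville_set_iff by blast
  then have q1: "1 \<le> real_of_int q" and qC: "C < q" by (auto simp: approx_of_order_def) linarith
  have "\<bar>\<zeta> ^ m - of_int (p ^ m) / of_int (q ^ m)\<bar> \<le> C * \<bar>\<zeta> - of_int p / of_int q\<bar>"
    using abs_power_diff_le_of_close[of \<zeta> "of_int p / of_int q" m] approx_of_order_dist_le_1[OF app] \<open>0 < m * \<eta> + 1\<close>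
    unfolding C_def by (simp add: power_divide)
  also have "\<dots> \<le> C * of_int q powr - (m * \<eta> + 1)"
    using app by (intro mult_left_mono) (auto simp: approx_of_order_def C_def)
  also have "\<dots> = (C / of_int q) * of_int (q ^ m) powr - \<eta>"
    using q1 by (simp add: powr_diff powr_powr flip: powr_realpow)
  also have "\<dots> \<le> of_int (q ^ m) powr - \<eta>"
    using qC q1 by (intro mult_left_le_one_le) (auto simp: C_def)
  finally have "approx_of_order (\<zeta> ^ m) \<eta> (q ^ m) (p ^ m)"
    using q1 by (simp add: approx_of_order_def)
  moreover have "X < q ^ m"
    using q self_le_power[of q m] q1 m by simp
  moreover have "of_int (p ^ m) / of_int (q ^ m) \<noteq> \<zeta> ^ m"
  proof
    assume "of_int (p ^ m) / of_int (q ^ m) = \<zeta> ^ m"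
    then have "(of_int p / of_int q) ^ m = \<zeta> ^ m"
      by (simp add: power_divide)
    then have "\<bar>of_int p / of_int q\<bar> ^ m = \<bar>\<zeta>\<bar> ^ m"
      by (metis power_abs)
    then have "\<bar>\<zeta>\<bar> = \<bar>of_int p / of_int q\<bar>"
      using m by (simp add: power_eq_iff_eq_base)
    then show False
      using Liouville_set_irrational[OF \<zeta>] by (metis Rats_abs_iff Rats_divide Rats_of_int)
  qed
  ultimately show "\<exists>x y. approx_of_order (\<zeta> ^ m) \<eta> x y \<and> X < x \<and> of_int y / of_int x \<noteq> \<zeta> ^ m"
    by blast
qed

lemma approx_of_order_inverse:
  fixes \<zeta> \<eta> :: real and p q :: int
  assumes "0 < \<zeta>" "0 \<le> \<eta>" and app: "approx_of_order \<zeta> (2 * \<eta> + 3) q p"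
    and q_bounds: "2 < \<zeta> * q" "2 * \<zeta> < q" "2 < \<zeta>\<^sup>2 * q"
  shows "approx_of_order (inverse \<zeta>) \<eta> p q" and "\<zeta> * q < 2 * p"
proof -
  have q1: "1 \<le> real_of_int q"
    using app by (simp add: approx_of_order_def)
  define d where "d = \<bar>\<zeta> - of_int p / of_int q\<bar>"
  have "of_int q powr - (2 * \<eta> + 3) = of_int q powr (- (2 * \<eta>) - 3)"
    by (rule arg_cong[where f = "\<lambda>t. of_int q powr t"]) simp
  then have "d \<le> of_int q powr - (2 * \<eta>) / of_int q ^ 3"
    using app q1 by (simp add: d_def approx_of_order_def powr_diff powr_numeral)
  also have "\<dots> \<le> of_int q powr - (2 * \<eta>) / of_int q"
    using q1 by (intro divide_left_mono) (auto simp: self_le_power)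
  finally have d: "d \<le> of_int q powr - (2 * \<eta>) / of_int q" .
  also have "\<dots> \<le> 1 / of_int q"
    using q1 \<open>0 \<le> \<eta>\<close> by (intro divide_right_mono) (auto simp: powr_minus_divide ge_one_powr_ge_zero)
  also have "\<dots> < \<zeta> / 2"
    using q_bounds q1 by (simp add: field_simps)
  finally have "d * q < \<zeta> / 2 * q"
    using q1 by (intro mult_strict_right_mono) auto
  moreover have "\<zeta> * q - p = (\<zeta> - of_int p / of_int q) * q"
    using q1 by (simp add: field_simps)
  then have "d * q = \<bar>\<zeta> * q - p\<bar>"
    using q1 by (simp add: d_def abs_mult)
  ultimately have p: "\<zeta> * q < 2 * of_int p" "of_int p < 2 * \<zeta> * q"
    by linarith+
  then show "\<zeta> * q < 2 * p" by simp
  have "2 * \<zeta> * q \<le> of_int q * of_int q"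
    using q_bounds q1 by (intro mult_right_mono) auto
  with p have "0 < p" "of_int p \<le> (of_int q ^ 2 :: real)"
    using q_bounds by (simp_all add: power2_eq_square)
  have "\<bar>inverse \<zeta> - of_int q / of_int p\<bar> = d * (of_int q / (\<zeta> * of_int p))"
    using \<open>0 < p\<close> \<open>0 < \<zeta>\<close> q1 by (simp add: d_def field_simps abs_mult abs_minus_commute)
  also have "\<dots> \<le> of_int q powr - (2 * \<eta>) / of_int q * (2 / \<zeta>\<^sup>2)"
    using d p q1 \<open>0 < p\<close> \<open>0 < \<zeta>\<close> by (intro mult_mono) (auto simp: d_def field_simps power2_eq_square)
  also have "\<dots> \<le> of_int q powr - (2 * \<eta>)"
    using q_bounds q1 \<open>0 < \<zeta>\<close> by (simp add: field_simps)
  also have "\<dots> = (of_int q powr 2) powr - \<eta>"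
    by (simp add: powr_powr)
  also have "\<dots> = (of_int q ^ 2) powr - \<eta>"
    using q1 by (simp add: powr_numeral)
  also have "\<dots> \<le> of_int p powr - \<eta>"
    using \<open>of_int p \<le> of_int q ^ 2\<close> \<open>0 < p\<close> \<open>0 \<le> \<eta>\<close> by (intro powr_mono2') auto
  finally show "approx_of_order (inverse \<zeta>) \<eta> p q"
    using \<open>0 < p\<close> by (simp add: approx_of_order_def)
qed

lemma Liouville_set_inverse_of_pos:
  assumes \<zeta>: "\<zeta> \<in> Liouville_set" and "0 < \<zeta>"
  shows "inverse \<zeta> \<in> Liouville_set"
  unfolding Liouville_set_iff
proof (intro allI impI)
  fix \<eta> :: real and X :: int
  assume "0 < \<eta>"
  define Q where "Q = 2 / \<zeta> + 2 * \<zeta> + 2 / \<zeta>\<^sup>2 + 2 * \<bar>X\<bar> / \<zeta>"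
  have "0 < 2 * \<eta> + 3" using \<open>0 < \<eta>\<close> by simp
  then obtain q p where app: "approx_of_order \<zeta> (2 * \<eta> + 3) q p" and "\<lceil>Q\<rceil> < q"
    and inexact: "of_int p / of_int q \<noteq> \<zeta>"
    using \<zeta> unfolding Liouville_set_iff by blast
  then have "Q < q" by linarith
  have "2 / \<zeta> < q" "2 * \<zeta> < q" "2 / \<zeta>\<^sup>2 < q" "2 * \<bar>X\<bar> / \<zeta> < q"
  proof -
    have "0 \<le> 2 / \<zeta>" "0 \<le> 2 * \<zeta>" "0 \<le> 2 / \<zeta>\<^sup>2" "0 \<le> 2 * \<bar>X\<bar> / \<zeta>"
      using \<open>0 < \<zeta>\<close> by auto
    with \<open>Q < q\<close> show "2 / \<zeta> < q" "2 * \<zeta> < q" "2 / \<zeta>\<^sup>2 < q" "2 * \<bar>X\<bar> / \<zeta> < q"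
      unfolding Q_def by linarith+
  qed
  then have q_bounds: "2 < \<zeta> * q" "2 * \<zeta> < q" "2 < \<zeta>\<^sup>2 * q" "2 * \<bar>X\<bar> < \<zeta> * q"
    using \<open>0 < \<zeta>\<close> by (simp_all add: field_simps)
  have "approx_of_order (inverse \<zeta>) \<eta> p q" "\<zeta> * q < 2 * p"
    using approx_of_order_inverse[OF \<open>0 < \<zeta>\<close> _ app q_bounds(1-3)] \<open>0 < \<eta>\<close> by auto
  have "X < p" "0 < p"
    using q_bounds(1,4) \<open>\<zeta> * q < 2 * p\<close> abs_ge_self[of "of_int X :: real"] by simp_all
  then have "of_int q / of_int p \<noteq> inverse \<zeta>"
    using inexact by (auto simp: field_simps)
  with \<open>approx_of_order (inverse \<zeta>) \<eta> p q\<close> \<open>X < p\<close>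
  show "\<exists>x y. approx_of_order (inverse \<zeta>) \<eta> x y \<and> X < x \<and> of_int y / of_int x \<noteq> inverse \<zeta>"
    by blast
qed

lemma Liouville_set_inverse:
  assumes "\<zeta> \<in> Liouville_set"
  shows "inverse \<zeta> \<in> Liouville_set"
proof (cases "0 < \<zeta>")
  case True
  with assms show ?thesis by (rule Liouville_set_inverse_of_pos)
next
  case False
  moreover have "\<zeta> \<noteq> 0" using Liouville_set_irrational[OF assms] by auto
  ultimately have "inverse (- \<zeta>) \<in> Liouville_set"
    by (intro Liouville_set_inverse_of_pos Liouville_set_uminus assms) simp
  then show ?thesis
    using Liouville_set_uminus by fastforce
qed

lemma Liouville_set_powr_of_int:
  assumes "\<zeta> \<in> Liouville_set" "0 < \<zeta>" "m \<noteq> 0"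
  shows "\<zeta> powr of_int m \<in> Liouville_set"
proof (cases "0 < m")
  case True
  then have "\<zeta> powr of_int m = \<zeta> ^ nat m"
    using assms(2) by (simp add: powr_realpow[symmetric])
  with True assms(1) show ?thesis
    by (simp add: Liouville_set_power)
next
  case False
  then have "\<zeta> powr of_int m = inverse (\<zeta> ^ nat (- m))"
    using assms(2) by (simp add: powr_minus powr_realpow[symmetric])
  with False assms show ?thesis
    by (simp add: Liouville_set_power Liouville_set_inverse)
qed

section \<open>Numbers with very fast rational approximations\<close>

lemma dvd_of_power_eq_power_mult:
  fixes u v p P \<pi> :: int
  assumes "prime \<pi>" "multiplicity \<pi> p = 1" "\<not> \<pi> dvd P" "v \<noteq> 0" "0 < b"
    and eq: "u ^ b * P ^ a = p ^ a * v ^ b"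
  shows "b dvd a"
proof -
  have "p \<noteq> 0" "P \<noteq> 0"
    using assms(2,3) by auto
  then have "u \<noteq> 0"
    using eq \<open>v \<noteq> 0\<close> \<open>0 < b\<close> by (auto simp: zero_power)
  have "prime_elem \<pi>"
    using assms(1) by (rule prime_imp_prime_elem)
  have "multiplicity \<pi> (u ^ b * P ^ a) = b * multiplicity \<pi> u"
    using \<open>prime_elem \<pi>\<close> assms(3) \<open>u \<noteq> 0\<close> \<open>P \<noteq> 0\<close>
    by (simp add: prime_elem_multiplicity_mult_distrib prime_elem_multiplicity_power_distrib
        not_dvd_imp_multiplicity_0)
  moreover have "multiplicity \<pi> (p ^ a * v ^ b) = a + b * multiplicity \<pi> v"
    using \<open>prime_elem \<pi>\<close> assms(2,4) \<open>p \<noteq> 0\<close>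
    by (simp add: prime_elem_multiplicity_mult_distrib prime_elem_multiplicity_power_distrib)
  ultimately have "a = b * (multiplicity \<pi> u - multiplicity \<pi> v)"
    using eq by (simp add: diff_mult_distrib2)
  then show ?thesis by simp
qed

lemma exists_crossing_index:
  fixes s :: "nat \<Rightarrow> 'a :: linorder"
  assumes "s K \<le> W" "W < s m" "K \<le> m"
  obtains k where "K \<le> k" "s k \<le> W" "W < s (Suc k)"
  using assms
proof (induction m)
  case 0
  then show ?case by (simp add: leD)
next
  case (Suc m)
  show ?case
  proof (cases "s m \<le> W")
    case True
    moreover have "K \<le> m"
      using Suc.prems(2,3,4) by (metis le_SucE leD)
    ultimately show ?thesis using Suc.prems by blast
  next
    case False
    then show ?thesis using Suc by (metis le_SucE not_le)
  qed
qed

lemma powers_of_approximations_close: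
  fixes \<xi> \<zeta> x r c v q V Q :: real and a b :: nat
  assumes eq: "\<xi> ^ b = \<zeta> ^ a" and "1 \<le> v" "1 \<le> q"
    and x: "\<bar>\<xi> - x\<bar> \<le> 1 / (v ^ b * V)" and qV: "q ^ (a + 1) \<le> V"
    and q_large: "2 * (b * (\<bar>\<xi>\<bar> + 1) ^ (b - 1)) < q"
    and r: "\<bar>\<zeta> - r\<bar> \<le> c / Q" and "c \<le> Q" and vQ: "v ^ (2 * b) < Q"
    and Q_large: "(2 * c * (a * (\<bar>\<zeta>\<bar> + 1) ^ (a - 1))) ^ 2 * q ^ (2 * a) < Q"
  shows "\<bar>x ^ b - r ^ a\<bar> < 1 / (v ^ b * q ^ a)"
proof -
  define C1 where "C1 = b * (\<bar>\<xi>\<bar> + 1) ^ (b - 1)"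
  define C2 where "C2 = a * (\<bar>\<zeta>\<bar> + 1) ^ (a - 1)"
  have "0 \<le> C1" "0 \<le> C2" by (simp_all add: C1_def C2_def)
  have "1 \<le> V" using qV \<open>1 \<le> q\<close> one_le_power[of q "a + 1"] by linarith
  have "1 \<le> Q" using vQ \<open>1 \<le> v\<close> one_le_power[of v "2 * b"] by linarith
  have "0 \<le> c" using r \<open>1 \<le> Q\<close> by (smt (verit) divide_neg_pos)
  have "1 \<le> v ^ b * V"
    using \<open>1 \<le> v\<close> \<open>1 \<le> V\<close> mult_mono[of 1 "v ^ b" 1 V] by simp
  then have "1 / (v ^ b * V) \<le> 1" by simp
  then have "\<bar>\<xi> ^ b - x ^ b\<bar> \<le> C1 * (1 / (v ^ b * V))"
    using abs_power_diff_le_of_close[of \<xi> x b] x \<open>0 \<le> C1\<close>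
    unfolding C1_def by (meson dual_order.trans mult_left_mono)
  also have "\<dots> \<le> C1 * (1 / (v ^ b * q ^ (a + 1)))"
    using qV \<open>0 \<le> C1\<close> \<open>1 \<le> v\<close> \<open>1 \<le> q\<close> \<open>1 \<le> V\<close>
    by (intro mult_left_mono divide_left_mono mult_left_mono) auto
  also have "\<dots> < 1 / (2 * (v ^ b * q ^ a))"
    using q_large \<open>1 \<le> v\<close> \<open>1 \<le> q\<close> unfolding C1_def by (simp add: field_simps)
  finally have \<xi>x: "\<bar>\<xi> ^ b - x ^ b\<bar> < 1 / (2 * (v ^ b * q ^ a))" .
  have "(2 * c * C2 * q ^ a * v ^ b) ^ 2 = (2 * c * C2) ^ 2 * q ^ (2 * a) * v ^ (2 * b)"
    by (simp add: power_mult_distrib power_mult mult.commute)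
  also have "\<dots> < Q ^ 2"
    using Q_large vQ \<open>1 \<le> v\<close> \<open>1 \<le> Q\<close>
    unfolding power2_eq_square by (intro mult_strict_mono) (auto simp: C2_def)
  finally have "2 * c * C2 * q ^ a * v ^ b < Q"
    by (rule power_less_imp_less_base) (use \<open>1 \<le> Q\<close> in simp)
  have "c / Q \<le> 1" using \<open>c \<le> Q\<close> \<open>1 \<le> Q\<close> by simp
  then have "\<bar>\<zeta> ^ a - r ^ a\<bar> \<le> C2 * (c / Q)"
    using abs_power_diff_le_of_close[of \<zeta> r a] r \<open>0 \<le> C2\<close>
    unfolding C2_def by (meson dual_order.trans mult_left_mono)
  also have "\<dots> < 1 / (2 * (v ^ b * q ^ a))"
    using \<open>2 * c * C2 * q ^ a * v ^ b < Q\<close> \<open>1 \<le> v\<close> \<open>1 \<le> q\<close> \<open>1 \<le> Q\<close>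
    by (simp add: field_simps)
  finally show ?thesis
    using \<xi>x eq by linarith
qed

locale fast_rational_approximation =
  fixes \<zeta> c :: real and p q :: "nat \<Rightarrow> int"
  assumes denom_ge_2: "2 \<le> q k"
    and denom_Suc: "q (Suc k) = q k ^ (k + 2)"
    and approx: "\<bar>\<zeta> - of_int (p k) / of_int (q k)\<bar> \<le> c / of_int (q (Suc k))"
begin

lemma denom_gt: "int k < q k"
proof (induction k)
  case 0
  then show ?case using denom_ge_2[of 0] by simp
next
  case (Suc k)
  have "2 * q k \<le> q k ^ 2"
    using denom_ge_2[of k] by (simp add: power2_eq_square mult_right_mono)
  also have "\<dots> \<le> q (Suc k)"
    using denom_ge_2[of k] unfolding denom_Suc by (intro power_increasing) auto
  finally show ?case
    using Suc by simp
qed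

lemma Liouville:
  assumes inexact: "\<And>k. of_int (p k) / of_int (q k) \<noteq> \<zeta>"
  shows "\<zeta> \<in> Liouville_set"
  unfolding Liouville_set_iff
proof (intro allI impI)
  fix \<eta> :: real and X :: int
  assume "0 < \<eta>"
  define k where "k = nat \<lceil>max (max \<eta> c) (of_int X)\<rceil>"
  have "max (max \<eta> c) (of_int X) \<le> real k"
    unfolding k_def by (rule real_nat_ceiling_ge)
  moreover have "real k < of_int (q k)" "(2 :: real) \<le> of_int (q k)"
    using denom_gt[of k] denom_ge_2[of k] by linarith+
  ultimately have q: "1 \<le> real_of_int (q k)" "\<eta> \<le> k" "c < of_int (q k)" "X < q k"
    by linarith+
  have "c / of_int (q (Suc k)) = c / of_int (q k) ^ 2 / of_int (q k) ^ k"
    by (simp add: denom_Suc power_add power2_eq_square field_simps)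
  also have "\<dots> \<le> 1 / of_int (q k) ^ k"
  proof (intro divide_right_mono)
    have "c < of_int (q k) ^ 2"
      using q(3) self_le_power[OF q(1), of 2] by (rule less_le_trans) simp
    then show "c / of_int (q k) ^ 2 \<le> 1"
      using q(1) by (simp add: divide_le_eq)
  qed (use q in simp)
  also have "\<dots> = of_int (q k) powr - real k"
    using q by (simp add: powr_minus_divide powr_realpow)
  also have "\<dots> \<le> of_int (q k) powr - \<eta>"
    using q by (intro powr_mono) auto
  finally have "approx_of_order \<zeta> \<eta> (q k) (p k)"
    using approx[of k] q by (simp add: approx_of_order_def)
  then show "\<exists>x y. approx_of_order \<zeta> \<eta> x y \<and> X < x \<and> of_int y / of_int x \<noteq> \<zeta>"
    using q inexact by blast
qed

lemma approx_between_denoms: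
  assumes "\<xi> \<in> Liouville_set" "1 \<le> b"
  obtains k u v where "K \<le> k" "approx_of_order \<xi> (real (b + 2 * b * (a + 1))) v u"
    "q k ^ (a + 1) \<le> v ^ (2 * b * (a + 1))" "v ^ (2 * b) < q (Suc k)"
proof -
  define E where "E = 2 * b * (a + 1)"
  have "0 < real (b + E)" using \<open>1 \<le> b\<close> by simp
  then obtain v u where app: "approx_of_order \<xi> (b + E) v u" and "q K ^ (a + 1) < v"
    using assms(1) unfolding Liouville_set_iff by blast
  then have "1 \<le> v" by (simp add: approx_of_order_def)
  then have "q K ^ (a + 1) \<le> v ^ E"
    using \<open>q K ^ (a + 1) < v\<close> self_le_power[of v E] \<open>1 \<le> b\<close> by (simp add: E_def)
  define m where "m = nat (v ^ E) + K"
  have "v ^ E < q m"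
    using denom_gt[of m] unfolding m_def by linarith
  also have "\<dots> \<le> q m ^ (a + 1)"
    using denom_ge_2[of m] by (intro self_le_power) auto
  finally obtain k where "K \<le> k" "q k ^ (a + 1) \<le> v ^ E" "v ^ E < q (Suc k) ^ (a + 1)"
    using exists_crossing_index[of "\<lambda>k. q k ^ (a + 1)" K "v ^ E" m] \<open>q K ^ (a + 1) \<le> v ^ E\<close>
    unfolding m_def by auto
  moreover have "(v ^ (2 * b)) ^ (a + 1) < q (Suc k) ^ (a + 1)"
    using \<open>v ^ E < q (Suc k) ^ (a + 1)\<close> by (simp only: E_def power_mult)
  then have "v ^ (2 * b) < q (Suc k)"
    by (rule power_less_imp_less_base) (use denom_ge_2[of "Suc k"] in simp)
  ultimately show ?thesis
    using that app unfolding E_def by blast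
qed

lemma exists_exact_power_relation:
  assumes \<xi>: "\<xi> \<in> Liouville_set" and eq: "\<xi> ^ b = \<zeta> ^ a" and "1 \<le> b"
  obtains k u v where "v \<noteq> 0" "u ^ b * q k ^ a = p k ^ a * v ^ b"
proof -
  define E where "E = 2 * b * (a + 1)"
  define C1 where "C1 = b * (\<bar>\<xi>\<bar> + 1) ^ (b - 1)"
  define C2 where "C2 = a * (\<bar>\<zeta>\<bar> + 1) ^ (a - 1)"
  define K where "K = 2 * a + nat \<lceil>c\<rceil> + nat \<lceil>2 * C1\<rceil> + nat \<lceil>(2 * c * C2) ^ 2\<rceil>"
  obtain k u v where "K \<le> k" and app: "approx_of_order \<xi> (b + E) v u"
    and qk: "q k ^ (a + 1) \<le> v ^ E" and vQ: "v ^ (2 * b) < q (Suc k)"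
    using approx_between_denoms[OF \<xi> \<open>1 \<le> b\<close>, of K a] unfolding E_def by blast
  then have "1 \<le> v" by (simp add: approx_of_order_def)
  have qk_large: "real k < of_int (q k)" "2 \<le> real_of_int (q k)"
    using denom_gt[of k] denom_ge_2[of k] by simp_all
  have "nat \<lceil>c\<rceil> \<le> k" "nat \<lceil>2 * C1\<rceil> \<le> k" "nat \<lceil>(2 * c * C2) ^ 2\<rceil> \<le> k" and "2 * a \<le> k"
    using \<open>K \<le> k\<close> unfolding K_def by linarith+
  then have k_large: "c \<le> k" "2 * C1 \<le> k" "(2 * c * C2) ^ 2 \<le> k"
    by (meson of_nat_mono order_trans real_nat_ceiling_ge)+
  have "\<bar>(of_int u / of_int v) ^ b - (of_int (p k) / of_int (q k)) ^ a\<bar>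
          < 1 / (of_int v ^ b * of_int (q k) ^ a :: real)"
  proof (rule powers_of_approximations_close[OF eq, where V = "of_int v ^ E" and Q = "of_int (q (Suc k))" and c = c])
    have "of_int v powr - real (b + E) = 1 / (of_int v ^ b * of_int v ^ E)"
      using \<open>1 \<le> v\<close> by (simp add: powr_minus_divide powr_realpow power_add del: of_nat_add)
    then show "\<bar>\<xi> - of_int u / of_int v\<bar> \<le> 1 / (of_int v ^ b * of_int v ^ E)"
      using app by (simp add: approx_of_order_def)
    show "2 * (b * (\<bar>\<xi>\<bar> + 1) ^ (b - 1)) < of_int (q k)"
      using qk_large k_large unfolding C1_def by linarith
    show "c \<le> of_int (q (Suc k))"
      using denom_gt[of "Suc k"] k_large by linarith
    have "(2 * c * C2) ^ 2 * of_int (q k) ^ (2 * a) < of_int (q k) * of_int (q k) ^ (2 * a)"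
      using qk_large k_large by (intro mult_strict_right_mono) auto
    also have "\<dots> \<le> of_int (q k) ^ (k + 2)"
      using qk_large \<open>2 * a \<le> k\<close> by (simp flip: power_Suc)
    finally show "(2 * c * (a * (\<bar>\<zeta>\<bar> + 1) ^ (a - 1))) ^ 2 * of_int (q k) ^ (2 * a) < of_int (q (Suc k))"
      unfolding C2_def by (simp add: denom_Suc)
    show "of_int (q k) ^ (a + 1) \<le> (of_int v ^ E :: real)"
      using qk by (metis of_int_le_iff of_int_power)
    show "of_int v ^ (2 * b) < (of_int (q (Suc k)) :: real)"
      using vQ by (metis of_int_less_iff of_int_power)
  qed (use \<open>1 \<le> v\<close> qk_large approx[of k] in simp_all)
  then have "u ^ b * q k ^ a = p k ^ a * v ^ b"
    using \<open>1 \<le> v\<close> denom_ge_2[of k]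
    by (intro eq_if_dist_less_inverse_denominators) (simp_all add: power_divide)
  with \<open>1 \<le> v\<close> that show ?thesis by (metis not_one_le_zero)
qed

lemma power_not_Liouville:
  assumes "prime \<pi>" "\<And>k. multiplicity \<pi> (p k) = 1" "\<And>k. \<not> \<pi> dvd q k"
    and "\<xi> ^ b = \<zeta> ^ a" "1 \<le> b" "\<not> b dvd a"
  shows "\<xi> \<notin> Liouville_set"
proof
  assume "\<xi> \<in> Liouville_set"
  obtain k u v where "v \<noteq> 0" "u ^ b * q k ^ a = p k ^ a * v ^ b"
    by (rule exists_exact_power_relation[OF \<open>\<xi> \<in> Liouville_set\<close> assms(4,5)])
  then have "b dvd a"
    using dvd_of_power_eq_power_mult[OF assms(1,2,3)] \<open>1 \<le> b\<close> by simp
  with \<open>\<not> b dvd a\<close> show False ..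
qed

lemma powr_not_Liouville:
  assumes "prime \<pi>" "\<And>k. multiplicity \<pi> (p k) = 1" "\<And>k. \<not> \<pi> dvd q k"
    and "0 < \<zeta>" and not_int: "of_int a / (of_int b :: real) \<notin> \<int>"
  shows "\<zeta> powr (of_int a / of_int b) \<notin> Liouville_set"
proof
  assume L: "\<zeta> powr (of_int a / of_int b) \<in> Liouville_set"
  define a' b' where "a' = nat \<bar>a\<bar>" and "b' = nat \<bar>b\<bar>"
  have "b \<noteq> 0" "\<not> b dvd a"
    using not_int by (auto simp: of_int_div_of_int_in_Ints_iff)
  then have "1 \<le> b'" "\<not> b' dvd a'"
    by (auto simp: a'_def b'_def nat_dvd_iff)
  define \<xi> where "\<xi> = \<zeta> powr (real a' / real b')"
  have "\<xi> ^ b' = \<zeta> ^ a'"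
    using \<open>0 < \<zeta>\<close> \<open>1 \<le> b'\<close> by (simp add: \<xi>_def powr_powr flip: powr_realpow)
  have ab: "\<bar>of_int a / of_int b\<bar> = real a' / real b'"
    by (simp add: a'_def b'_def abs_divide)
  have "\<xi> \<in> Liouville_set"
  proof (cases "0 \<le> of_int a / (of_int b :: real)")
    case True
    then have "of_int a / of_int b = real a' / real b'"
      using ab by (metis abs_of_nonneg)
    then show ?thesis using L by (simp add: \<xi>_def)
  next
    case False
    then have "of_int a / of_int b = - (real a' / real b')"
      using ab by (metis abs_of_neg minus_minus not_le)
    then have "\<zeta> powr (of_int a / of_int b) = inverse \<xi>"
      by (simp add: \<xi>_def powr_minus)
    then show ?thesis using Liouville_set_inverse[OF L] by simp
  qed
  then show False
    using power_not_Liouville[OF assms(1-3) \<open>\<xi> ^ b' = \<zeta> ^ a'\<close> \<open>1 \<le> b'\<close> \<open>\<not> b' dvd a'\<close>] by blast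
qed

end

definition zeta_exp :: "nat \<Rightarrow> nat \<Rightarrow> nat" where
  "zeta_exp N k = 2 * Suc N * fact (Suc k)"

definition zeta_digit :: "nat set \<Rightarrow> nat \<Rightarrow> int" where
  "zeta_digit S j = (if j \<in> S then 8 else 4)"

definition zeta_term :: "nat \<Rightarrow> nat set \<Rightarrow> nat \<Rightarrow> real" where
  "zeta_term N S j = of_int (zeta_digit S j) / 3 ^ zeta_exp N (Suc j)"

definition zeta :: "nat \<Rightarrow> int \<Rightarrow> nat set \<Rightarrow> real" where
  "zeta N A S = of_int A / 3 ^ zeta_exp N 0 + (\<Sum>j. zeta_term N S j)"

fun zeta_numer :: "nat \<Rightarrow> int \<Rightarrow> nat set \<Rightarrow> nat \<Rightarrow> int" where
  "zeta_numer N A S 0 = A"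
| "zeta_numer N A S (Suc k) = zeta_numer N A S k * 3 ^ ((k + 1) * zeta_exp N k) + zeta_digit S k"

lemma zeta_exp_Suc: "zeta_exp N (Suc k) = (k + 2) * zeta_exp N k"
  by (simp add: zeta_exp_def algebra_simps)

lemma zeta_exp_ge: "2 * (k + 1) \<le> zeta_exp N k"
proof -
  have "k + 1 \<le> Suc N * fact (Suc k)"
    using fact_ge_self[of "Suc k"] by (simp add: le_trans[OF _ mult_le_mono2])
  then show ?thesis by (simp add: zeta_exp_def)
qed

lemma zeta_exp_add_ge: "zeta_exp N k + i \<le> zeta_exp N (k + i)"
proof (induction i)
  case (Suc i)
  have "1 \<le> (k + i + 1) * zeta_exp N (k + i)"
    using zeta_exp_ge[of "k + i" N] by simp
  then show ?case
    using Suc by (simp add: zeta_exp_Suc)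
qed simp

lemma power_zeta_exp_Suc: "(x :: 'a :: monoid_mult) ^ zeta_exp N (Suc k) = (x ^ zeta_exp N k) ^ (k + 2)"
  by (simp only: zeta_exp_Suc mult.commute[of "k + 2"] power_mult)

lemma zeta_term_bounds:
  "4 / 3 ^ zeta_exp N (Suc j) \<le> zeta_term N S j" "zeta_term N S j \<le> 8 / 3 ^ zeta_exp N (Suc j)"
  by (simp_all add: zeta_term_def zeta_digit_def divide_right_mono)

lemma zeta_term_shift_le: "zeta_term N S (j + k) \<le> 8 / 3 ^ zeta_exp N (Suc k) * (1 / 3) ^ j"
proof -
  have "(3 :: real) ^ zeta_exp N (Suc k) * 3 ^ j \<le> 3 ^ zeta_exp N (Suc (j + k))"
    using zeta_exp_add_ge[of N "Suc k" j] by (simp add: add.commute flip: power_add)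
  then have "8 / (3 :: real) ^ zeta_exp N (Suc (j + k)) \<le> 8 / (3 ^ zeta_exp N (Suc k) * 3 ^ j)"
    by (intro divide_left_mono) auto
  then show ?thesis
    using zeta_term_bounds(2)[of N S "j + k"] by (simp add: power_one_over)
qed

lemma summable_zeta_term_shift: "summable (\<lambda>j. zeta_term N S (j + k))"
proof (rule summable_comparison_test')
  show "summable (\<lambda>j. 8 / 3 ^ zeta_exp N (Suc k) * (1 / 3 :: real) ^ j)"
    by (intro summable_mult summable_geometric) simp
  show "norm (zeta_term N S (j + k)) \<le> 8 / 3 ^ zeta_exp N (Suc k) * (1 / 3) ^ j" for j
    using zeta_term_shift_le zeta_term_bounds(1)[of N "j + k" S] by (simp add: order_trans[OF _ zeta_term_bounds(1)])
qed

lemma zeta_numer_div_eq: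
  "of_int (zeta_numer N A S k) / 3 ^ zeta_exp N k = of_int A / 3 ^ zeta_exp N 0 + (\<Sum>j<k. zeta_term N S j)"
proof (induction k)
  case (Suc k)
  have "(3 :: real) ^ zeta_exp N (Suc k) = 3 ^ zeta_exp N k * 3 ^ ((k + 1) * zeta_exp N k)"
    by (simp add: zeta_exp_Suc flip: power_add)
  then have "of_int (zeta_numer N A S (Suc k)) / 3 ^ zeta_exp N (Suc k)
      = of_int (zeta_numer N A S k) / 3 ^ zeta_exp N k + zeta_term N S k"
    by (simp add: zeta_term_def field_simps)
  then show ?case using Suc by simp
qed simp

lemma zeta_minus_partial_sum:
  "zeta N A S - of_int (zeta_numer N A S k) / 3 ^ zeta_exp N k = (\<Sum>j. zeta_term N S (j + k))"
  using suminf_split_initial_segment[OF summable_zeta_term_shift[of N S 0], of k]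
  by (simp add: zeta_def zeta_numer_div_eq)

lemma zeta_minus_partial_sum_bounds:
  "4 / 3 ^ zeta_exp N (Suc k) \<le> zeta N A S - of_int (zeta_numer N A S k) / 3 ^ zeta_exp N k"
  "zeta N A S - of_int (zeta_numer N A S k) / 3 ^ zeta_exp N k \<le> 12 / 3 ^ zeta_exp N (Suc k)"
proof -
  have sum: "summable (\<lambda>j. zeta_term N S (Suc j + k))"
    using summable_zeta_term_shift[of N S "Suc k"] by simp
  have "(\<Sum>j. zeta_term N S (j + k)) = zeta_term N S k + (\<Sum>j. zeta_term N S (Suc j + k))"
    using suminf_split_head[OF summable_zeta_term_shift[of N S k]] by simp
  moreover have "0 \<le> (\<Sum>j. zeta_term N S (Suc j + k))"
    using sum by (intro suminf_nonneg) (auto intro: order_trans[OF _ zeta_term_bounds(1)])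
  ultimately show "4 / 3 ^ zeta_exp N (Suc k) \<le> zeta N A S - of_int (zeta_numer N A S k) / 3 ^ zeta_exp N k"
    using zeta_term_bounds(1)[of N k S] by (simp add: zeta_minus_partial_sum)
  have "(\<Sum>j. zeta_term N S (j + k)) \<le> (\<Sum>j. 8 / 3 ^ zeta_exp N (Suc k) * (1 / 3 :: real) ^ j)"
    by (intro suminf_le summable_zeta_term_shift zeta_term_shift_le summable_mult summable_geometric) simp
  also have "\<dots> = 8 / 3 ^ zeta_exp N (Suc k) * (\<Sum>j. (1 / 3 :: real) ^ j)"
    by (intro suminf_mult summable_geometric) simp
  also have "\<dots> = 12 / 3 ^ zeta_exp N (Suc k)"
    using suminf_geometric[of "1 / 3 :: real"] by simp
  finally show "zeta N A S - of_int (zeta_numer N A S k) / 3 ^ zeta_exp N k \<le> 12 / 3 ^ zeta_exp N (Suc k)"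
    by (simp add: zeta_minus_partial_sum)
qed

lemma multiplicity_two_eq_1_if_mod_4:
  fixes x :: int
  assumes "x mod 4 = 2"
  shows "multiplicity 2 x = 1"
proof -
  define w where "w = 2 * (x div 4) + 1"
  have "x = 2 * w" "\<not> 2 dvd w"
    using assms unfolding w_def by presburger+
  moreover have "w \<noteq> 0"
    using \<open>\<not> 2 dvd w\<close> by auto
  ultimately show ?thesis
    by (simp add: multiplicity_times_same not_dvd_imp_multiplicity_0)
qed

lemma zeta_numer_mod_4: "zeta_numer N A S k mod 4 = A mod 4"
proof (induction k)
  case (Suc k)
  obtain t where t: "(k + 1) * zeta_exp N k = 2 * t"
    by (metis zeta_exp_def dvd_mult dvd_triv_left evenE mult.assoc)
  have "(3 :: int) ^ ((k + 1) * zeta_exp N k) = 9 ^ t"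
    by (simp only: t power_mult) simp
  then have "(3 :: int) ^ ((k + 1) * zeta_exp N k) mod 4 = 1"
    using power_mod[of "9 :: int" 4 t] by simp
  moreover have "zeta_digit S k mod 4 = 0"
    by (simp add: zeta_digit_def)
  ultimately show ?case
    using Suc by (simp add: mod_add_eq[symmetric] mod_mult_eq[symmetric])
qed simp

lemma zeta_numer_eq_if_agree:
  assumes "\<And>j. j < k \<Longrightarrow> j \<in> S \<longleftrightarrow> j \<in> T"
  shows "zeta_numer N A S k = zeta_numer N A T k"
  using assms by (induction k) (simp_all add: zeta_digit_def)

lemma zeta_inj:
  assumes "S \<noteq> T"
  shows "zeta N A S \<noteq> zeta N A T"
proof
  assume eq: "zeta N A S = zeta N A T"
  obtain k where k: "k \<in> S \<longleftrightarrow> k \<notin> T" and agree: "\<And>j. j < k \<Longrightarrow> j \<in> S \<longleftrightarrow> j \<in> T"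
    using assms exists_least_iff[of "\<lambda>k. k \<in> S \<longleftrightarrow> k \<notin> T"] by blast
  define Q where "Q = (3 :: real) ^ zeta_exp N (Suc k)"
  define \<tau> where "\<tau> U = zeta N A U - of_int (zeta_numer N A U (Suc k)) / 3 ^ zeta_exp N (Suc k)" for U
  have "4 / 3 ^ zeta_exp N (Suc (Suc k)) \<le> \<tau> U" "\<tau> U \<le> 12 / 3 ^ zeta_exp N (Suc (Suc k))" for U
    unfolding \<tau>_def by (rule zeta_minus_partial_sum_bounds)+
  moreover have "0 < 4 / (3 :: real) ^ zeta_exp N (Suc (Suc k))" by simp
  ultimately have \<tau>: "0 < \<tau> U" "\<tau> U \<le> 12 / 3 ^ zeta_exp N (Suc (Suc k))" for U
    by (meson less_le_trans)+
  have "(3 :: real) * Q \<le> 3 ^ zeta_exp N (Suc (Suc k))"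
    using zeta_exp_add_ge[of N "Suc k" 1] unfolding Q_def by (simp flip: power_Suc)
  then have "12 / 3 ^ zeta_exp N (Suc (Suc k)) \<le> 4 / Q"
    unfolding Q_def by (simp add: field_simps)
  moreover have "\<tau> T - \<tau> S = zeta_term N S k - zeta_term N T k"
    using eq zeta_numer_div_eq[of N A S "Suc k"] zeta_numer_div_eq[of N A T "Suc k"] zeta_numer_div_eq[of N A S k]
      zeta_numer_div_eq[of N A T k] zeta_numer_eq_if_agree[OF agree]
    by (simp add: \<tau>_def)
  moreover have "\<bar>zeta_term N S k - zeta_term N T k\<bar> = 4 / Q"
    using k by (auto simp: zeta_term_def zeta_digit_def Q_def)
  ultimately show False
    using \<tau>[of S] \<tau>[of T] by linarith
qed

lemma zeta_fast_rational_approximation: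
  "fast_rational_approximation (zeta N A S) 12 (zeta_numer N A S) (\<lambda>k. 3 ^ zeta_exp N k)"
proof
  fix k
  have "(3 :: int) ^ 1 \<le> 3 ^ zeta_exp N k"
    using zeta_exp_ge[of k N] by (intro power_increasing) auto
  then show "2 \<le> (3 :: int) ^ zeta_exp N k" by simp
  show "(3 :: int) ^ zeta_exp N (Suc k) = (3 ^ zeta_exp N k) ^ (k + 2)"
    by (rule power_zeta_exp_Suc)
  show "\<bar>zeta N A S - of_int (zeta_numer N A S k) / of_int (3 ^ zeta_exp N k)\<bar> \<le> 12 / of_int (3 ^ zeta_exp N (Suc k))"
    using zeta_minus_partial_sum_bounds[where N = N and k = k and A = A and S = S] by (simp add: less_le_trans[OF divide_pos_pos])
qed

lemma zeta_Liouville: "zeta N A S \<in> Liouville_set"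
proof (rule fast_rational_approximation.Liouville[OF zeta_fast_rational_approximation])
  fix k
  have "0 < 4 / (3 :: real) ^ zeta_exp N (Suc k)" by simp
  also have "\<dots> \<le> zeta N A S - of_int (zeta_numer N A S k) / 3 ^ zeta_exp N k"
    by (rule zeta_minus_partial_sum_bounds)
  finally show "of_int (zeta_numer N A S k) / of_int (3 ^ zeta_exp N k) \<noteq> zeta N A S"
    by simp
qed

lemma zeta_powr_Liouville_iff:
  assumes "A mod 4 = 2" "0 < zeta N A S" "a \<noteq> 0" "b \<noteq> 0"
  shows "zeta N A S powr (of_int a / of_int b) \<in> Liouville_set \<longleftrightarrow> of_int a / (of_int b :: real) \<in> \<int>"
proof
  assume L: "zeta N A S powr (of_int a / of_int b) \<in> Liouville_set"
  show "of_int a / (of_int b :: real) \<in> \<int>"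
  proof (rule ccontr)
    assume "of_int a / (of_int b :: real) \<notin> \<int>"
    then have "zeta N A S powr (of_int a / of_int b) \<notin> Liouville_set"
      using assms(1,2)
      by (intro fast_rational_approximation.powr_not_Liouville[OF zeta_fast_rational_approximation, of 2])
        (simp_all add: zeta_numer_mod_4 multiplicity_two_eq_1_if_mod_4)
    with L show False by simp
  qed
next
  assume "of_int a / (of_int b :: real) \<in> \<int>"
  then obtain t where t: "of_int a / of_int b = (of_int t :: real)"
    by (auto elim: Ints_cases)
  with assms(3,4) have "t \<noteq> 0" by auto
  with t show "zeta N A S powr (of_int a / of_int b) \<in> Liouville_set"
    using Liouville_set_powr_of_int[OF zeta_Liouville assms(2)] by simp
qed

lemma exists_zeta_in_ball:
  fixes c \<delta> :: real
  assumes "0 < \<delta>"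
  obtains N A where "A mod 4 = 2" "\<And>S. zeta N A S \<in> ball c \<delta>"
proof
  define N where "N = nat \<lceil>14 / \<delta>\<rceil>"
  define M where "M = (3 :: real) ^ zeta_exp N 0"
  define A where "A = 4 * \<lfloor>c * M / 4\<rfloor> + 2"
  show "A mod 4 = 2" by (simp add: A_def)
  have "0 < M" by (simp add: M_def)
  have "14 / \<delta> \<le> real N" unfolding N_def by (rule real_nat_ceiling_ge)
  also have "\<dots> < 3 ^ N"
  proof -
    have "N < 3 ^ N" by (rule power_gt_expt) simp
    then show ?thesis by (metis of_nat_less_iff of_nat_numeral of_nat_power)
  qed
  also have "\<dots> \<le> M"
    unfolding M_def zeta_exp_def by (intro power_increasing) auto
  finally have "14 / M < \<delta>" using \<open>0 < \<delta>\<close> \<open>0 < M\<close> by (simp add: field_simps)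
  have "\<bar>of_int A - c * M\<bar> \<le> 2"
    using of_int_floor_le[of "c * M / 4"] real_of_int_floor_add_one_gt[of "c * M / 4"]
    unfolding A_def of_int_add of_int_mult of_int_numeral abs_le_iff by linarith
  then have "\<bar>of_int A / M - c\<bar> \<le> 2 / M"
    using \<open>0 < M\<close> by (simp add: field_simps abs_divide)
  fix S
  have "\<bar>zeta N A S - of_int A / M\<bar> \<le> 12 / 3 ^ zeta_exp N 1"
    using zeta_minus_partial_sum_bounds[where N = N and k = 0 and A = A and S = S] \<open>0 < M\<close> by (simp add: M_def)
  also have "\<dots> \<le> 12 / M"
    unfolding M_def by (intro divide_left_mono power_increasing) (auto simp: zeta_exp_Suc)
  finally show "zeta N A S \<in> ball c \<delta>"
    using \<open>\<bar>of_int A / M - c\<bar> \<le> 2 / M\<close> \<open>14 / M < \<delta>\<close> by (simp add: dist_real_def)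
qed

lemma uncountable_nat_sets: "uncountable (UNIV :: nat set set)"
  by (metis Cantors_theorem Pow_UNIV empty_not_UNIV range_from_nat_into)

lemma uncountable_Liouville_powr_iff_Ints:
  fixes I :: "real set"
  assumes "I \<subseteq> {0<..}" "interior I \<noteq> {}"
  shows "uncountable {\<zeta> \<in> Liouville_set \<inter> I. \<forall>a b :: int. a \<noteq> 0 \<longrightarrow> b \<noteq> 0 \<longrightarrow>
           (f_pow a b \<zeta> \<in> Liouville_set \<longleftrightarrow> real_of_int a / real_of_int b \<in> \<int>)}"
    (is "uncountable ?G")
proof -
  obtain c \<delta> where "0 < \<delta>" "ball c \<delta> \<subseteq> I"
    using assms(2) by (meson all_not_in_conv mem_interior)
  then obtain N A where "A mod 4 = 2" and in_I: "\<And>S. zeta N A S \<in> I"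
    using exists_zeta_in_ball by (metis subsetD)
  have "zeta N A S \<in> ?G" for S
  proof -
    have "0 < zeta N A S"
      using in_I[of S] assms(1) by auto
    with in_I[of S] zeta_Liouville \<open>A mod 4 = 2\<close> show ?thesis
      by (simp add: f_pow_def zeta_powr_Liouville_iff)
  qed
  then have "range (zeta N A) \<subseteq> ?G" by blast
  moreover have "inj (zeta N A)"
    using zeta_inj by (meson injI)
  then have "uncountable (range (zeta N A))"
    using uncountable_nat_sets countable_image_inj_on by blast
  ultimately show ?thesis
    using countable_subset by blast
qed

lemma exists_Liouville_powr_iff_Ints:
  obtains \<zeta> where "\<zeta> \<in> Liouville_set" "0 < \<zeta>"
    "\<And>a b :: int. a \<noteq> 0 \<Longrightarrow> b \<noteq> 0 \<Longrightarrow> f_pow a b \<zeta> \<in> Liouville_set \<longleftrightarrow> real_of_int a / real_of_int b \<in> \<int>"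
proof -
  have "interior {0 :: real<..} \<noteq> {}" by (simp add: interior_open)
  from uncountable_Liouville_powr_iff_Ints[OF order.refl this]
  have "{\<zeta> \<in> Liouville_set \<inter> {0<..}. \<forall>a b :: int. a \<noteq> 0 \<longrightarrow> b \<noteq> 0 \<longrightarrow>
      (f_pow a b \<zeta> \<in> Liouville_set \<longleftrightarrow> real_of_int a / real_of_int b \<in> \<int>)} \<noteq> {}"
    by (metis countable_empty)
  then obtain \<zeta> where "\<zeta> \<in> Liouville_set" "0 < \<zeta>" "\<forall>a b :: int. a \<noteq> 0 \<longrightarrow> b \<noteq> 0 \<longrightarrow>
      (f_pow a b \<zeta> \<in> Liouville_set \<longleftrightarrow> real_of_int a / real_of_int b \<in> \<int>)"
    by auto
  with that show ?thesis by blast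
qed

lemma uncountable_Liouville_pos: "uncountable (Liouville_set \<inter> {0 :: real<..})"
proof -
  have "interior {0 :: real<..} \<noteq> {}" by (simp add: interior_open)
  from uncountable_Liouville_powr_iff_Ints[OF order.refl this]
  show ?thesis
    by (rule contrapos_nn) (erule countable_subset[rotated], blast)
qed

lemma uncountable_f_pow_image_Liouville:
  assumes "a \<noteq> 0" "b \<noteq> 0"
  shows "uncountable (f_pow a b ` (Liouville_set \<inter> {0<..}) \<inter> Liouville_set)"
proof -
  define g where "g \<xi> = \<xi> powr of_int a" for \<xi> :: real
  have "g ` (Liouville_set \<inter> {0<..}) \<subseteq> f_pow a b ` (Liouville_set \<inter> {0<..}) \<inter> Liouville_set"
  proof clarify
    fix \<xi> assume "\<xi> \<in> Liouville_set" "0 < \<xi>"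
    then have "\<xi> powr of_int b \<in> Liouville_set \<inter> {0<..}"
      using assms by (simp add: Liouville_set_powr_of_int)
    moreover have "g \<xi> = f_pow a b (\<xi> powr of_int b)"
      using assms(2) by (simp add: g_def f_pow_def powr_powr)
    moreover have "g \<xi> \<in> Liouville_set"
      using assms \<open>\<xi> \<in> Liouville_set\<close> \<open>0 < \<xi>\<close> by (simp add: g_def Liouville_set_powr_of_int)
    ultimately show "g \<xi> \<in> f_pow a b ` (Liouville_set \<inter> {0<..}) \<inter> Liouville_set"
      by (metis IntI image_eqI)
  qed
  moreover have "inj_on g (Liouville_set \<inter> {0<..})"
  proof (rule inj_onI)
    fix x y assume "x \<in> Liouville_set \<inter> {0<..}" "y \<in> Liouville_set \<inter> {0<..}" "g x = g y"
    then have "g x powr (1 / of_int a) = g y powr (1 / of_int a)" by simp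
    then show "x = y"
      using \<open>x \<in> _\<close> \<open>y \<in> _\<close> assms(1) by (simp add: g_def powr_powr)
  qed
  then have "uncountable (g ` (Liouville_set \<inter> {0<..}))"
    using uncountable_Liouville_pos countable_image_inj_on by blast
  ultimately show ?thesis
    using countable_subset by blast
qed

theorem theorem6p2:
  shows "(\<forall>I :: real set. I \<subseteq> {0<..} \<longrightarrow> interior I \<noteq> {} \<longrightarrow>
            uncountable {\<zeta> \<in> Liouville_set \<inter> I.
               \<forall>a b :: int. a \<noteq> 0 \<longrightarrow> b \<noteq> 0 \<longrightarrow>
                 (f_pow a b \<zeta> \<in> Liouville_set \<longleftrightarrow>
                  real_of_int a / real_of_int b \<in> \<int>)})
       \<and> (\<forall>a b :: int. a \<noteq> 0 \<longrightarrow> b \<noteq> 0 \<longrightarrow> coprime a b \<longrightarrow> \<bar>b\<bar> \<ge> 2 \<longrightarrow>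
            uncountable (f_pow a b ` (Liouville_set \<inter> {0<..}) \<inter> Liouville_set) \<and>
            \<not> (f_pow a b ` (Liouville_set \<inter> {0<..}) \<subseteq> Liouville_set))"
proof (intro conjI allI impI)
  show "uncountable {\<zeta> \<in> Liouville_set \<inter> I. \<forall>a b :: int. a \<noteq> 0 \<longrightarrow> b \<noteq> 0 \<longrightarrow>
          (f_pow a b \<zeta> \<in> Liouville_set \<longleftrightarrow> real_of_int a / real_of_int b \<in> \<int>)}"
    if "I \<subseteq> {0<..}" "interior I \<noteq> {}" for I :: "real set"
    using that by (rule uncountable_Liouville_powr_iff_Ints)
  fix a b :: int
  assume "a \<noteq> 0" "b \<noteq> 0" "coprime a b" "\<bar>b\<bar> \<ge> 2"
  then show "uncountable (f_pow a b ` (Liouville_set \<inter> {0<..}) \<inter> Liouville_set)"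
    by (intro uncountable_f_pow_image_Liouville)
  obtain \<zeta> where \<zeta>: "\<zeta> \<in> Liouville_set" "0 < \<zeta>"
    and iff: "f_pow a b \<zeta> \<in> Liouville_set \<longleftrightarrow> of_int a / (of_int b :: real) \<in> \<int>"
    using exists_Liouville_powr_iff_Ints \<open>a \<noteq> 0\<close> \<open>b \<noteq> 0\<close> by metis
  have "\<not> b dvd a"
    using \<open>coprime a b\<close> \<open>\<bar>b\<bar> \<ge> 2\<close> coprime_common_divisor[of a b b] by (auto simp: zdvd1_eq)
  then have "f_pow a b \<zeta> \<notin> Liouville_set"
    using iff \<open>b \<noteq> 0\<close> by (simp add: of_int_div_of_int_in_Ints_iff)
  with \<zeta> show "\<not> f_pow a b ` (Liouville_set \<inter> {0<..}) \<subseteq> Liouville_set"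
    by auto
qed


end
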